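(* Let $\Gamma$ be a partition of $[n]$ into $k$ nonempty sets, $n_{\min}:=\min_{S\in\Gamma}|S|$, $n_{\max}:=\max_{S\in\Gamma}|S|$, let $p\in(0,1]$, and let $W\subseteq[n]$ be random, containing each index independently with probability $p$; for $S\in\Gamma$ put $S':=S\cap W$. Fix $S,T\in\Gamma$ with $S\ne T$, let $\epsilon\in(0,1)$, and suppose $pn_{\min}\ge\frac{104}3\big(\frac{n_{\max}}{n_{\min}}\big)^2\log\frac6\epsilon$. Then with probability at least $1-\epsilon$, \[\Big|p\Big(\frac1{|S'|}+\frac1{|T'|}\Big)-\Big(\frac1{|S|}+\frac1{|T|}\Big)\Big|<\sqrt{\frac{104}3\cdot\frac{\log(6/\epsilon)}{pn_{\min}^3}}.\]
   Context: Logarithms are natural. *)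

theory Defs
  imports "HOL-Probability.Probability" "HOL-Library.Disjoint_Sets"
begin

(* The random set W \<subseteq> {1..n}, each index included independently with probability p,
   is represented by its indicator function, drawn from the product pmf below. *)
definition random_subset_pmf :: "nat \<Rightarrow> real \<Rightarrow> (nat \<Rightarrow> bool) pmf" where
  "random_subset_pmf n p = Pi_pmf {1..n} False (\<lambda>_. bernoulli_pmf p)"

end

theory Submission
  imports Defs
begin

text \<open>
  The number of indices of a block \<open>A\<close> that fall into \<open>W\<close> is binomial with mean \<open>\<mu> = p |A|\<close>.
  With \<open>L = log (6/\<epsilon>)\<close> and \<open>r = sqrt (L/\<mu>)\<close>, the multiplicative Chernoff bounds put it below
  \<open>(1 - sqrt 2 r) \<mu>\<close> or above \<open>(1 + 2 r) \<mu>\<close> with probability at most \<open>2 exp (-L) = \<epsilon>/3\<close>.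
  The hypothesis forces \<open>r \<le> 0.17\<close>, and between these thresholds
  \<open>|p / |A \<inter> W| - 1/|A|| \<le> 2 r/|A| \<le> 2 sqrt (L / (p n_min^3))\<close>.
  Adding the errors for \<open>S\<close> and \<open>T\<close> gives \<open>4 sqrt (L / (p n_min^3))\<close>, which is below the claimed
  bound because \<open>16 < 104/3\<close>; the union bound leaves probability at least \<open>1 - 2\<epsilon>/3\<close>.
\<close>

lemma expectation_exp_binomial_pmf:
  assumes "0 \<le> p" "p \<le> 1"
  shows "measure_pmf.expectation (binomial_pmf m p) (\<lambda>k. exp (s * real k)) = (1 - p + p * exp s) ^ m"
proof -
  have "measure_pmf.expectation (binomial_pmf m p) (\<lambda>k. exp (s * real k))
      = (\<Sum>k\<le>m. exp (s * real k) * pmf (binomial_pmf m p) k)"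
    by (rule integral_measure_pmf_real) (use assms in \<open>auto simp: set_pmf_binomial_eq split: if_splits\<close>)
  also have "\<dots> = (\<Sum>k\<le>m. of_nat (m choose k) * (p * exp s) ^ k * (1 - p) ^ (m - k))"
    using assms by (intro sum.cong refl)
      (simp add: pmf_binomial exp_of_nat_mult[symmetric] mult_ac power_mult_distrib)
  also have "\<dots> = (p * exp s + (1 - p)) ^ m"
    by (rule binomial_ring[symmetric])
  finally show ?thesis
    by (simp add: add.commute)
qed

lemma binomial_mgf_le_exp:
  fixes p s :: real
  assumes "0 \<le> p" "p \<le> 1"
  shows "(1 - p + p * exp s) ^ m \<le> exp (real m * p * (exp s - 1))"
proof -
  have "0 \<le> 1 - p + p * exp s"
    using assms by (smt (verit) exp_gt_zero mult_nonneg_nonneg)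
  moreover have "1 - p + p * exp s \<le> exp (p * (exp s - 1))"
    using exp_ge_add_one_self[of "p * (exp s - 1)"] by (simp add: algebra_simps)
  ultimately have "(1 - p + p * exp s) ^ m \<le> exp (p * (exp s - 1)) ^ m"
    by (intro power_mono)
  also have "\<dots> = exp (real m * p * (exp s - 1))"
    by (simp add: exp_of_nat_mult[symmetric] mult_ac)
  finally show ?thesis .
qed

lemma prob_binomial_pmf_ge_exp_bound:
  assumes "0 \<le> p" "p \<le> 1" "0 < s"
  shows "measure_pmf.prob (binomial_pmf m p) {k. a \<le> real k} \<le> exp (real m * p * (exp s - 1) - s * a)"
proof -
  have "measure_pmf.prob (binomial_pmf m p) {k. a \<le> real k}
      \<le> exp (- s * a) * measure_pmf.expectation (binomial_pmf m p) (\<lambda>k. exp (s * real k))"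
    using measure_pmf.Chernoff_ineq_ge[of s "binomial_pmf m p" UNIV real a] assms
    by (simp add: set_integrable_def set_lebesgue_integral_def integrable_measure_pmf_finite)
  also have "\<dots> \<le> exp (- s * a) * exp (real m * p * (exp s - 1))"
    using assms by (simp add: expectation_exp_binomial_pmf binomial_mgf_le_exp)
  finally show ?thesis
    by (simp add: exp_add[symmetric])
qed

lemma prob_binomial_pmf_le_exp_bound:
  assumes "0 \<le> p" "p \<le> 1" "0 < s"
  shows "measure_pmf.prob (binomial_pmf m p) {k. real k \<le> a} \<le> exp (real m * p * (exp (- s) - 1) + s * a)"
proof -
  have "measure_pmf.prob (binomial_pmf m p) {k. real k \<le> a}
      \<le> exp (s * a) * measure_pmf.expectation (binomial_pmf m p) (\<lambda>k. exp (- s * real k))"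
    using measure_pmf.Chernoff_ineq_le[of s "binomial_pmf m p" UNIV real a] assms
    by (simp add: set_integrable_def set_lebesgue_integral_def integrable_measure_pmf_finite)
  also have "\<dots> \<le> exp (s * a) * exp (real m * p * (exp (- s) - 1))"
    using assms expectation_exp_binomial_pmf[of p m "- s"] binomial_mgf_le_exp[of p "- s" m] by simp
  finally show ?thesis
    by (simp add: exp_add[symmetric] add.commute)
qed

lemma prob_binomial_pmf_ge_Chernoff:
  assumes "0 \<le> p" "p \<le> 1" "0 < \<delta>" "\<delta> \<le> 2"
  shows "measure_pmf.prob (binomial_pmf m p) {k. (1 + \<delta>) * (m * p) \<le> real k}
           \<le> exp (- (\<delta>\<^sup>2 * (m * p) / 4))"
proof -
  have "measure_pmf.prob (binomial_pmf m p) {k. (1 + \<delta>) * (m * p) \<le> real k}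
      \<le> exp (real m * p * (exp (\<delta> / 2) - 1) - \<delta> / 2 * ((1 + \<delta>) * (m * p)))"
    using assms by (intro prob_binomial_pmf_ge_exp_bound) auto
  also have "\<dots> \<le> exp (- (\<delta>\<^sup>2 * (m * p) / 4))"
  proof -
    have "exp (\<delta> / 2) \<le> 1 + \<delta> / 2 + (\<delta> / 2)\<^sup>2"
      using assms by (intro exp_bound) auto
    then have "real m * p * (exp (\<delta> / 2) - 1) \<le> real m * p * (\<delta> / 2 + (\<delta> / 2)\<^sup>2)"
      using assms by (intro mult_left_mono) auto
    then show ?thesis
      by (simp add: power2_eq_square algebra_simps)
  qed
  finally show ?thesis .
qed

lemma exp_minus_le_quadratic:
  fixes t :: real
  assumes "0 \<le> t"
  shows "exp (- t) \<le> 1 - t + t\<^sup>2 / 2"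
proof -
  have pos: "0 < 1 + t + t\<^sup>2 / 2"
    using assms by (simp add: add_pos_nonneg)
  have "exp (- t) = 1 / exp t"
    by (simp add: exp_minus field_simps)
  also have "\<dots> \<le> 1 / (1 + t + t\<^sup>2 / 2)"
    using exp_lower_Taylor_quadratic[OF assms] pos by (intro divide_left_mono) auto
  also have "\<dots> \<le> 1 - t + t\<^sup>2 / 2"
  proof -
    have "(1 - t + t\<^sup>2 / 2) * (1 + t + t\<^sup>2 / 2) = 1 + (t\<^sup>2)\<^sup>2 / 4"
      by (simp add: algebra_simps power2_eq_square)
    then have "1 \<le> (1 - t + t\<^sup>2 / 2) * (1 + t + t\<^sup>2 / 2)"
      by simp
    then show ?thesis
      using pos by (simp add: divide_le_eq)
  qed
  finally show ?thesis .
qed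

lemma prob_binomial_pmf_le_Chernoff:
  assumes "0 \<le> p" "p \<le> 1" "0 < \<delta>"
  shows "measure_pmf.prob (binomial_pmf m p) {k. real k \<le> (1 - \<delta>) * (m * p)}
           \<le> exp (- (\<delta>\<^sup>2 * (m * p) / 2))"
proof -
  have "measure_pmf.prob (binomial_pmf m p) {k. real k \<le> (1 - \<delta>) * (m * p)}
      \<le> exp (real m * p * (exp (- \<delta>) - 1) + \<delta> * ((1 - \<delta>) * (m * p)))"
    using assms by (intro prob_binomial_pmf_le_exp_bound) auto
  also have "\<dots> \<le> exp (- (\<delta>\<^sup>2 * (m * p) / 2))"
  proof -
    have "real m * p * (exp (- \<delta>) - 1) \<le> real m * p * (- \<delta> + \<delta>\<^sup>2 / 2)"
      using assms exp_minus_le_quadratic[of \<delta>] by (intro mult_left_mono) auto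
    then show ?thesis
      by (simp add: power2_eq_square algebra_simps)
  qed
  finally show ?thesis .
qed

lemma abs_ratio_minus_one_le:
  \<comment> \<open>any \<open>r \<le> (sqrt 2 - 1)/2\<close> would do; \<open>17/100\<close> exceeds the \<open>sqrt (3/104)\<close> provided by the hypothesis\<close>
  fixes \<mu> r X :: real
  assumes "0 < \<mu>" "0 \<le> r" "r \<le> 17/100"
    and lower: "(1 - sqrt 2 * r) * \<mu> < X" and upper: "X < (1 + 2 * r) * \<mu>"
  shows "0 < X" "\<bar>\<mu> / X - 1\<bar> \<le> 2 * r"
proof -
  have "sqrt 2 \<le> 1415/1000"
    by (rule real_le_lsqrt) (auto simp: power2_eq_square)
  then have "sqrt 2 * (2 * r) \<le> 1415/1000 * (34/100)"
    using assms by (intro mult_mono) auto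
  also have "\<dots> \<le> 2 - sqrt 2"
    using \<open>sqrt 2 \<le> 1415/1000\<close> by simp
  finally have "sqrt 2 * \<mu> \<le> (2 - 2 * sqrt 2 * r) * \<mu>"
    using assms by (intro mult_right_mono) auto
  also have "\<dots> < 2 * X"
    using lower by (simp add: algebra_simps)
  finally have sqrt2_\<mu>: "sqrt 2 * \<mu> < 2 * X" .
  then show X_pos: "0 < X"
    using assms by (smt (verit) real_sqrt_gt_zero mult_pos_pos)
  have "\<bar>\<mu> - X\<bar> \<le> 2 * r * X"
  proof (cases "\<mu> \<le> X")
    case True
    have "X - \<mu> < 2 * r * \<mu>"
      using upper by (simp add: algebra_simps)
    also have "\<dots> \<le> 2 * r * X"
      using True assms by (intro mult_left_mono) auto
    finally show ?thesis
      using True by simp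
  next
    case False
    have "\<mu> - X < sqrt 2 * r * \<mu>"
      using lower by (simp add: algebra_simps)
    also have "\<dots> \<le> r * (2 * X)"
      using mult_left_mono[OF less_imp_le[OF sqrt2_\<mu>], of r] assms by (simp add: mult_ac)
    finally show ?thesis
      using False by simp
  qed
  moreover have "\<mu> / X - 1 = (\<mu> - X) / X"
    using X_pos by (simp add: field_simps)
  ultimately show "\<bar>\<mu> / X - 1\<bar> \<le> 2 * r"
    using X_pos by (simp add: divide_le_eq)
qed

lemma prob_binomial_pmf_reciprocal_deviation:
  fixes m :: nat and p L :: real
  assumes "0 < m" "0 < p" "p \<le> 1" "0 < L" "104/3 * L \<le> p * m"
  shows "measure_pmf.prob (binomial_pmf m p)
           {k. \<not> (0 < k \<and> \<bar>p / real k - 1 / real m\<bar> \<le> 2 * sqrt (L / (p * real m ^ 3)))}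
         \<le> 2 * exp (- L)"
proof -
  define \<mu> where "\<mu> = m * p"
  define r where "r = sqrt (L / \<mu>)"
  have \<mu>_pos: "0 < \<mu>"
    using assms by (simp add: \<mu>_def)
  have r_sq: "r\<^sup>2 * \<mu> = L"
    using assms \<mu>_pos by (simp add: r_def)
  have r_pos: "0 < r"
    using assms \<mu>_pos by (simp add: r_def)
  have "r\<^sup>2 \<le> (17/100)\<^sup>2"
    using assms \<mu>_pos by (simp add: r_def \<mu>_def divide_le_eq mult.commute power2_eq_square)
  then have r: "0 \<le> r" "r \<le> 17/100"
    using r_pos by (auto intro: power2_le_imp_le)
  have "sqrt (L / (p * real m ^ 3)) = sqrt ((L / \<mu>) / (real m)\<^sup>2)"
    by (simp add: \<mu>_def power2_eq_square power3_eq_cube mult_ac)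
  also have "\<dots> = r / m"
    unfolding real_sqrt_divide r_def by simp
  finally have r_div_m: "sqrt (L / (p * real m ^ 3)) = r / m" .
  let ?bad = "{k. \<not> (0 < k \<and> \<bar>p / real k - 1 / real m\<bar> \<le> 2 * sqrt (L / (p * real m ^ 3)))}"
  let ?lower = "{k. real k \<le> (1 - sqrt 2 * r) * \<mu>}" and ?upper = "{k. (1 + 2 * r) * \<mu> \<le> real k}"
  have "?bad \<subseteq> ?lower \<union> ?upper"
  proof (rule subsetI, rule ccontr)
    fix k
    assume "k \<notin> ?lower \<union> ?upper"
    then have "0 < real k" "\<bar>\<mu> / k - 1\<bar> \<le> 2 * r"
      using abs_ratio_minus_one_le[OF \<mu>_pos r, of "real k"] by auto
    moreover have "p / real k - 1 / real m = (\<mu> / k - 1) / m"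
      using assms \<open>0 < real k\<close> by (simp add: \<mu>_def field_simps)
    ultimately have "k \<notin> ?bad"
      using assms by (simp add: r_div_m divide_right_mono)
    moreover assume "k \<in> ?bad"
    ultimately show False
      by simp
  qed
  then have "measure_pmf.prob (binomial_pmf m p) ?bad
      \<le> measure_pmf.prob (binomial_pmf m p) (?lower \<union> ?upper)"
    by (intro measure_pmf.finite_measure_mono) auto
  also have "\<dots> \<le> measure_pmf.prob (binomial_pmf m p) ?lower + measure_pmf.prob (binomial_pmf m p) ?upper"
    by (rule measure_Un_le) auto
  also have "measure_pmf.prob (binomial_pmf m p) ?lower \<le> exp (- L)"
  proof -
    have "measure_pmf.prob (binomial_pmf m p) ?lower \<le> exp (- ((sqrt 2 * r)\<^sup>2 * \<mu> / 2))"
      unfolding \<mu>_def using assms r_pos by (intro prob_binomial_pmf_le_Chernoff) auto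
    also have "(sqrt 2 * r)\<^sup>2 * \<mu> / 2 = L"
      using r_sq by (simp add: power_mult_distrib)
    finally show ?thesis .
  qed
  also have "measure_pmf.prob (binomial_pmf m p) ?upper \<le> exp (- L)"
  proof -
    have "measure_pmf.prob (binomial_pmf m p) ?upper \<le> exp (- ((2 * r)\<^sup>2 * \<mu> / 4))"
      unfolding \<mu>_def using assms r_pos r by (intro prob_binomial_pmf_ge_Chernoff) auto
    also have "(2 * r)\<^sup>2 * \<mu> / 4 = L"
      using r_sq by (simp add: power_mult_distrib)
    finally show ?thesis .
  qed
  finally show ?thesis
    by simp
qed

lemma map_pmf_card_inter_random_subset:
  assumes "A \<subseteq> {1..n}" "0 \<le> p" "p \<le> 1"
  shows "map_pmf (\<lambda>w. card (A \<inter> {i. w i})) (random_subset_pmf n p) = binomial_pmf (card A) p"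
proof -
  have "finite A"
    using assms finite_subset by blast
  have "binomial_pmf (card A) p = map_pmf (\<lambda>f. card {x\<in>A. f x}) (Pi_pmf A False (\<lambda>_. bernoulli_pmf p))"
    using \<open>finite A\<close> assms by (intro binomial_pmf_altdef') auto
  moreover have "Pi_pmf A False (\<lambda>_. bernoulli_pmf p)
      = map_pmf (\<lambda>f x. if x \<in> A then f x else False) (random_subset_pmf n p)"
    unfolding random_subset_pmf_def using assms by (intro Pi_pmf_subset) auto
  moreover have "{x\<in>A. if x \<in> A then w x else False} = A \<inter> {i. w i}" for w
    by auto
  ultimately show ?thesis
    by (simp add: pmf.map_comp o_def)
qed

lemma prob_random_subset_reciprocal_deviation:
  fixes A :: "nat set" and p L m\<^sub>0 :: real
  assumes "A \<subseteq> {1..n}" "0 < m\<^sub>0" "m\<^sub>0 \<le> card A" "0 < p" "p \<le> 1" "0 < L" "104/3 * L \<le> p * m\<^sub>0"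
  shows "measure_pmf.prob (random_subset_pmf n p)
           {w. \<not> (0 < card (A \<inter> {i. w i}) \<and>
                  \<bar>p / card (A \<inter> {i. w i}) - 1 / card A\<bar> \<le> 2 * sqrt (L / (p * m\<^sub>0 ^ 3)))}
         \<le> 2 * exp (- L)"
proof -
  let ?good = "\<lambda>c k. 0 < k \<and> \<bar>p / real k - 1 / card A\<bar> \<le> 2 * sqrt (L / (p * c ^ 3))"
  have "sqrt (L / (p * real (card A) ^ 3)) \<le> sqrt (L / (p * m\<^sub>0 ^ 3))"
    using assms by (intro real_sqrt_le_mono divide_left_mono mult_left_mono power_mono mult_pos_pos) auto
  then have "{k. \<not> ?good m\<^sub>0 k} \<subseteq> {k. \<not> ?good (card A) k}"
    by (auto simp del: real_sqrt_le_iff)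
  then have "measure_pmf.prob (binomial_pmf (card A) p) {k. \<not> ?good m\<^sub>0 k}
      \<le> measure_pmf.prob (binomial_pmf (card A) p) {k. \<not> ?good (card A) k}"
    by (intro measure_pmf.finite_measure_mono) auto
  also have "\<dots> \<le> 2 * exp (- L)"
  proof (rule prob_binomial_pmf_reciprocal_deviation)
    show "104/3 * L \<le> p * card A"
      using assms mult_left_mono[of m\<^sub>0 "card A" p] by linarith
  qed (use assms in auto)
  finally show ?thesis
    using assms by (simp add: map_pmf_card_inter_random_subset[symmetric] vimage_def)
qed

lemma partition_on_block_card_bounds:
  assumes "partition_on X \<Gamma>" "finite X" "A \<in> \<Gamma>"
  shows "A \<subseteq> X" "0 < Min (card ` \<Gamma>)" "Min (card ` \<Gamma>) \<le> card A" "card A \<le> Max (card ` \<Gamma>)"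
proof -
  have "finite \<Gamma>"
    using assms by (intro finite_elements)
  have block_subset: "B \<subseteq> X" if "B \<in> \<Gamma>" for B
    using partition_onD1[OF assms(1)] that by blast
  have card_pos: "0 < card B" if "B \<in> \<Gamma>" for B
    using partition_onD3[OF assms(1)] block_subset[OF that] that assms(2)
    by (auto simp: card_gt_0_iff intro: finite_subset)
  show "A \<subseteq> X"
    using block_subset assms(3) .
  show "0 < Min (card ` \<Gamma>)"
    using \<open>finite \<Gamma>\<close> assms card_pos by (subst Min_gr_iff) auto
  show "Min (card ` \<Gamma>) \<le> card A" "card A \<le> Max (card ` \<Gamma>)"
    using \<open>finite \<Gamma>\<close> assms by auto
qed

lemma abs_sum_reciprocal_deviations_less:
  fixes p x y s t Q :: real
  assumes "0 < Q" "\<bar>p / x - 1 / s\<bar> \<le> 2 * sqrt Q" "\<bar>p / y - 1 / t\<bar> \<le> 2 * sqrt Q"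
  shows "\<bar>p * (1 / x + 1 / y) - (1 / s + 1 / t)\<bar> < sqrt (104/3 * Q)"
proof -
  have "\<bar>p * (1 / x + 1 / y) - (1 / s + 1 / t)\<bar> = \<bar>(p / x - 1 / s) + (p / y - 1 / t)\<bar>"
    by (simp add: algebra_simps)
  also have "\<dots> \<le> 4 * sqrt Q"
    using assms by linarith
  also have "\<dots> < sqrt (104/3) * sqrt Q"
    using assms by (simp add: real_less_rsqrt)
  finally show ?thesis
    by (simp only: real_sqrt_mult)
qed

lemma measure_pmf_prob_ge_Int_union_bound:
  assumes "A \<inter> B \<subseteq> E"
  shows "1 - measure_pmf.prob M (- A) - measure_pmf.prob M (- B) \<le> measure_pmf.prob M E"
proof -
  have "1 - measure_pmf.prob M (- A \<union> - B) = measure_pmf.prob M (A \<inter> B)"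
    using measure_pmf.prob_compl[of "- A \<union> - B" M] by (simp add: Diff_eq)
  also have "\<dots> \<le> measure_pmf.prob M E"
    using assms by (intro measure_pmf.finite_measure_mono) auto
  finally show ?thesis
    using measure_Un_le[of "- A" M "- B"] by simp
qed

theorem lemma12:
  fixes n k :: nat and \<Gamma> :: "nat set set" and p \<epsilon> :: real and S T :: "nat set"
  assumes "partition_on {1..n} \<Gamma>" and "card \<Gamma> = k"
    and "0 < p" and "p \<le> 1"
    and "S \<in> \<Gamma>" and "T \<in> \<Gamma>" and "S \<noteq> T"
    and "0 < \<epsilon>" and "\<epsilon> < 1"
    and "p * real (Min (card ` \<Gamma>)) \<ge>
           104/3 * (real (Max (card ` \<Gamma>)) / real (Min (card ` \<Gamma>)))^2 * ln (6/\<epsilon>)"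
  shows "measure_pmf.prob (random_subset_pmf n p)
           {w. card (S \<inter> {i. w i}) > 0 \<and> card (T \<inter> {i. w i}) > 0 \<and>
               \<bar>p * (1 / real (card (S \<inter> {i. w i})) + 1 / real (card (T \<inter> {i. w i})))
                 - (1 / real (card S) + 1 / real (card T))\<bar>
               < sqrt (104/3 * ln (6/\<epsilon>) / (p * real (Min (card ` \<Gamma>)) ^ 3))}
         \<ge> 1 - \<epsilon>"
    (is "measure_pmf.prob ?W ?event \<ge> _")
proof -
  define n\<^sub>m\<^sub>i\<^sub>n L where "n\<^sub>m\<^sub>i\<^sub>n = Min (card ` \<Gamma>)" and "L = ln (6 / \<epsilon>)"
  define Q where "Q = L / (p * n\<^sub>m\<^sub>i\<^sub>n ^ 3)"
  note block = partition_on_block_card_bounds[OF assms(1) finite_atLeastAtMost, folded n\<^sub>m\<^sub>i\<^sub>n_def]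
  have L: "0 < L" "exp (- L) = \<epsilon> / 6"
    using assms(8,9) by (simp_all add: L_def exp_minus)
  have "1 \<le> (real (Max (card ` \<Gamma>)) / n\<^sub>m\<^sub>i\<^sub>n)\<^sup>2"
    using block[OF assms(5)] by simp
  then have "104/3 * L \<le> 104/3 * (real (Max (card ` \<Gamma>)) / n\<^sub>m\<^sub>i\<^sub>n)\<^sup>2 * L"
    using L by simp
  then have "104/3 * L \<le> p * n\<^sub>m\<^sub>i\<^sub>n"
    using assms(10) by (simp add: L_def n\<^sub>m\<^sub>i\<^sub>n_def)
  define good :: "nat set \<Rightarrow> (nat \<Rightarrow> bool) \<Rightarrow> bool"
    where "good A w \<longleftrightarrow> 0 < card (A \<inter> {i. w i}) \<and>
    \<bar>p / card (A \<inter> {i. w i}) - 1 / card A\<bar> \<le> 2 * sqrt Q" for A w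
  have bad: "measure_pmf.prob ?W (- {w. good A w}) \<le> \<epsilon> / 3" if "A \<in> \<Gamma>" for A
    using prob_random_subset_reciprocal_deviation[of A n n\<^sub>m\<^sub>i\<^sub>n p L] block[OF that] assms(3,4) L
      \<open>104/3 * L \<le> p * n\<^sub>m\<^sub>i\<^sub>n\<close> by (simp add: good_def Q_def Compl_eq)
  have "0 < Q"
    using L block[OF assms(5)] assms(3) by (simp add: Q_def)
  have threshold: "sqrt (104/3 * ln (6/\<epsilon>) / (p * real (Min (card ` \<Gamma>)) ^ 3)) = sqrt (104/3 * Q)"
    by (simp add: Q_def L_def n\<^sub>m\<^sub>i\<^sub>n_def)
  have "w \<in> ?event" if "good S w" "good T w" for w
    using that abs_sum_reciprocal_deviations_less[OF \<open>0 < Q\<close>]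
    unfolding good_def mem_Collect_eq threshold by blast
  then have "1 - \<epsilon> / 3 - \<epsilon> / 3 \<le> measure_pmf.prob ?W ?event"
    using measure_pmf_prob_ge_Int_union_bound[of "{w. good S w}" "{w. good T w}" ?event ?W]
      bad[OF assms(5)] bad[OF assms(6)] by force
  then show ?thesis
    using assms(8) by linarith
qed

end
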